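(* Let $\lambda=\langle1^{m_1},2^{m_2},\dots,k^{m_k}\rangle$ with all $m_i>0$, $n\ge1$, $x_1,\dots,x_n>0$, $t>0$, and put $M_j=m_j+\dots+m_k$, $M_{k+1}=0$. For $1\le j\le k$, the stationary current of species $j$ in the mTAZRP of type $\lambda$ on $n$ sites, i.e. $\sum_w\pi(w)\,x_1^{-1}t^{d_j(w)}[c_j(w)]_t$ where $\pi$ is the stationary distribution and $c_j(w)$, $d_j(w)$ are the numbers of particles at site $1$ of species $j$ and of species $>j$ respectively, equals $$[M_j]_t\frac{\widetilde H_{\langle1^{M_j-1}\rangle}(x;1,t)}{\widetilde H_{\langle1^{M_j}\rangle}(x;1,t)}-[M_{j+1}]_t\frac{\widetilde H_{\langle1^{M_{j+1}-1}\rangle}(x;1,t)}{\widetilde H_{\langle1^{M_{j+1}}\rangle}(x;1,t)},$$ where the second term is $0$ when $j=k$ and $x=(x_1,\dots,x_n)$.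
   Context: mTAZRP: for a partition $\lambda$ and $n\ge1$, sites $1,\dots,n$ on a ring (site $n+1$ is site $1$); a configuration assigns to each site a multiset of species with union the multiset of parts of $\lambda$; if site $j$ has $c$ particles of species $r$ and $d$ of species larger than $r$, a particle of species $r$ jumps from $j$ to $j+1$ at rate $x_j^{-1}t^d[c]_t$. $\langle1^{m_1},\dots,k^{m_k}\rangle$ is the partition with part $i$ occurring $m_i$ times. Notation: $[a]_t=1+t+\dots+t^{a-1}$ ($[0]_t=0$), $[a]_t!=\prod_{b\le a}[b]_t$, $\begin{bmatrix}m\\ \eta_1,\dots,\eta_n\end{bmatrix}_t=[m]_t!/\prod_i[\eta_i]_t!$, $\widetilde H_{\langle1^m\rangle}(x_1,\dots,x_n;1,t)=\sum_{\eta_1+\dots+\eta_n=m,\ \eta_i\ge0}\begin{bmatrix}m\\ \eta_1,\dots,\eta_n\end{bmatrix}_t\prod_i x_i^{\eta_i}$, with $\widetilde H_{\langle1^0\rangle}=1$. *)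

theory Defs
  imports Complex_Main
begin

definition qint :: "real \<Rightarrow> nat \<Rightarrow> real" where
  "qint t a = (\<Sum>i<a. t ^ i)"

definition qfact :: "real \<Rightarrow> nat \<Rightarrow> real" where
  "qfact t a = (\<Prod>b=1..a. qint t b)"

definition compositions :: "nat \<Rightarrow> nat \<Rightarrow> (nat \<Rightarrow> nat) set" where
  "compositions n m = {\<eta>. (\<forall>i. i \<notin> {1..n} \<longrightarrow> \<eta> i = 0) \<and> (\<Sum>i=1..n. \<eta> i) = m}"

text \<open>Modified Macdonald polynomial H~_{<1^m>}(x_1,...,x_n;1,t).\<close>
definition Htilde1 :: "nat \<Rightarrow> (nat \<Rightarrow> real) \<Rightarrow> real \<Rightarrow> nat \<Rightarrow> real" where
  "Htilde1 n x t m =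
     (\<Sum>\<eta>\<in>compositions n m.
        qfact t m / (\<Prod>i=1..n. qfact t (\<eta> i)) * (\<Prod>i=1..n. x i ^ \<eta> i))"

text \<open>Configurations of the mTAZRP of type <1^{m_1},...,k^{m_k}> on sites 1..n:
  w j r = number of particles of species r at site j.\<close>
definition configs :: "nat \<Rightarrow> (nat \<Rightarrow> nat) \<Rightarrow> nat \<Rightarrow> (nat \<Rightarrow> nat \<Rightarrow> nat) set" where
  "configs k m n = {w. (\<forall>j r. w j r \<noteq> 0 \<longrightarrow> j \<in> {1..n} \<and> r \<in> {1..k})
                      \<and> (\<forall>r\<in>{1..k}. (\<Sum>j=1..n. w j r) = m r)}"

definition nxt :: "nat \<Rightarrow> nat \<Rightarrow> nat" where
  "nxt n j = (if j = n then 1 else j + 1)"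

definition jump :: "nat \<Rightarrow> (nat \<Rightarrow> nat \<Rightarrow> nat) \<Rightarrow> nat \<Rightarrow> nat \<Rightarrow> (nat \<Rightarrow> nat \<Rightarrow> nat)" where
  "jump n w j r = (\<lambda>i s. w i s - (if i = j \<and> s = r then 1 else 0)
                          + (if i = nxt n j \<and> s = r then 1 else 0))"

definition larger :: "nat \<Rightarrow> (nat \<Rightarrow> nat \<Rightarrow> nat) \<Rightarrow> nat \<Rightarrow> nat \<Rightarrow> nat" where
  "larger k w j r = (\<Sum>s\<in>{r<..k}. w j s)"

definition jump_rate :: "nat \<Rightarrow> (nat \<Rightarrow> real) \<Rightarrow> real \<Rightarrow> (nat \<Rightarrow> nat \<Rightarrow> nat) \<Rightarrow> nat \<Rightarrow> nat \<Rightarrow> real" where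
  "jump_rate k x t w j r = inverse (x j) * t ^ larger k w j r * qint t (w j r)"

definition trans_rate :: "nat \<Rightarrow> nat \<Rightarrow> (nat \<Rightarrow> real) \<Rightarrow> real
      \<Rightarrow> (nat \<Rightarrow> nat \<Rightarrow> nat) \<Rightarrow> (nat \<Rightarrow> nat \<Rightarrow> nat) \<Rightarrow> real" where
  "trans_rate k n x t w w' =
     (\<Sum>j=1..n. \<Sum>r=1..k. if 0 < w j r \<and> jump n w j r = w' then jump_rate k x t w j r else 0)"

definition stationary :: "nat \<Rightarrow> (nat \<Rightarrow> nat) \<Rightarrow> nat \<Rightarrow> (nat \<Rightarrow> real) \<Rightarrow> real
      \<Rightarrow> ((nat \<Rightarrow> nat \<Rightarrow> nat) \<Rightarrow> real) \<Rightarrow> bool" where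
  "stationary k m n x t \<pi> \<longleftrightarrow>
     (\<forall>w\<in>configs k m n. 0 \<le> \<pi> w) \<and> (\<Sum>w\<in>configs k m n. \<pi> w) = 1 \<and>
     (\<forall>w\<in>configs k m n.
        (\<Sum>w'\<in>configs k m n. \<pi> w' * trans_rate k n x t w' w)
        = \<pi> w * (\<Sum>w'\<in>configs k m n. trans_rate k n x t w w'))"

text \<open>Stationary current of species j (across the edge from site 1 to site 2).\<close>
definition current :: "nat \<Rightarrow> (nat \<Rightarrow> nat) \<Rightarrow> nat \<Rightarrow> (nat \<Rightarrow> real) \<Rightarrow> real
      \<Rightarrow> ((nat \<Rightarrow> nat \<Rightarrow> nat) \<Rightarrow> real) \<Rightarrow> nat \<Rightarrow> real" where
  "current k m n x t \<pi> j = (\<Sum>w\<in>configs k m n. \<pi> w * jump_rate k x t w 1 j)"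

end

theory Submission
  imports Defs "HOL-Library.FuncSet"
begin

text \<open>
  Recording at each site \<open>i\<close> only the number \<open>a i\<close> of particles of species \<open>\<ge> j\<close> maps the
  mTAZRP onto a single-species zero range process on the compositions of \<open>M j\<close>: the rates
  \<open>x i\<^sup>-\<^sup>1 t\<^sup>d [c]\<^sub>t\<close> of the species \<open>r \<ge> j\<close> present at a site telescope to \<open>x i\<^sup>-\<^sup>1 [a i]\<^sub>t\<close>.
  This process is irreducible and has the product stationary measure
  \<open>\<Prod>i. x i ^ a i / [a i]\<^sub>t!\<close>, of total mass \<open>H(M j) / [M j]\<^sub>t!\<close>.  The image of a stationary
  distribution of the mTAZRP is stationary for it, hence, by a maximum principle, equal to this
  measure normalised.  So particles of species \<open>\<ge> j\<close> leave site 1 at expected rate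
  \<open>[M j]\<^sub>t H(M j - 1) / H(M j)\<close>, and the current of species \<open>j\<close> is the difference of these
  expected rates for \<open>j\<close> and \<open>j + 1\<close>.
\<close>

section \<open>\<open>t\<close>-integers\<close>

lemma qint_0 [simp]: "qint t 0 = 0"
  by (simp add: qint_def)

lemma qint_Suc: "qint t (Suc a) = qint t a + t ^ a"
  by (simp add: qint_def)

lemma qint_add: "qint t (a + b) = qint t b + t ^ b * qint t a"
  by (induction a) (auto simp: qint_Suc algebra_simps power_add)

lemma qint_pos: "0 < t \<Longrightarrow> 0 < a \<Longrightarrow> 0 < qint t a"
  unfolding qint_def by (rule sum_pos2[where i=0]) auto

lemma qint_nonneg: "0 < t \<Longrightarrow> 0 \<le> qint t a"
  unfolding qint_def by (intro sum_nonneg) auto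

lemma qfact_Suc: "qfact t (Suc a) = qfact t a * qint t (Suc a)"
  unfolding qfact_def by (simp add: prod.nat_ivl_Suc')

lemma qfact_pos: "0 < t \<Longrightarrow> 0 < qfact t a"
  unfolding qfact_def by (intro prod_pos) (auto intro: qint_pos)

lemma qint_sum:
  assumes "j \<le> Suc k"
  shows "qint t (\<Sum>r=j..k. a r) = (\<Sum>r=j..k. t ^ (\<Sum>s\<in>{r<..k}. a s) * qint t (a r))"
  using assms
proof (induction j rule: inc_induct)
  case (step p)
  have "{p<..k} = {Suc p..k}"
    by auto
  with step show ?case
    by (simp add: sum.atLeast_Suc_atMost qint_add)
qed simp

lemma power_div_qfact_Suc:
  assumes "0 < (y::real)" "0 < t"
  shows "y ^ Suc a / qfact t (Suc a) * (inverse y * qint t (Suc a)) = y ^ a / qfact t a"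
  using assms qint_pos[OF assms(2), of "Suc a"] qfact_pos[OF assms(2), of a]
  by (simp add: qfact_Suc field_simps)

section \<open>Finite Markov chains\<close>

definition balanced :: "'a set \<Rightarrow> ('a \<Rightarrow> 'a \<Rightarrow> real) \<Rightarrow> ('a \<Rightarrow> real) \<Rightarrow> bool" where
  "balanced E q \<nu> \<longleftrightarrow> (\<forall>b\<in>E. (\<Sum>a\<in>E. \<nu> a * q a b) = \<nu> b * (\<Sum>a\<in>E. q b a))"

lemma balanced_iff_generator:
  assumes fin: "finite E"
  shows "balanced E q \<nu> \<longleftrightarrow> (\<forall>F. (\<Sum>a\<in>E. \<nu> a * (\<Sum>b\<in>E. q a b * (F b - F a))) = 0)"
proof
  assume bal: "balanced E q \<nu>"
  show "\<forall>F. (\<Sum>a\<in>E. \<nu> a * (\<Sum>b\<in>E. q a b * (F b - F a))) = 0"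
  proof
    fix F
    have "(\<Sum>a\<in>E. \<nu> a * (\<Sum>b\<in>E. q a b * (F b - F a)))
        = (\<Sum>a\<in>E. \<Sum>b\<in>E. \<nu> a * q a b * F b) - (\<Sum>a\<in>E. \<nu> a * (\<Sum>b\<in>E. q a b) * F a)"
      by (simp add: sum_distrib_left sum_distrib_right right_diff_distrib sum_subtractf mult.assoc)
    also have "(\<Sum>a\<in>E. \<Sum>b\<in>E. \<nu> a * q a b * F b) = (\<Sum>b\<in>E. (\<Sum>a\<in>E. \<nu> a * q a b) * F b)"
      by (subst sum.swap) (simp add: sum_distrib_right)
    also have "\<dots> = (\<Sum>a\<in>E. \<nu> a * (\<Sum>b\<in>E. q a b) * F a)"
      using bal unfolding balanced_def by simp
    finally show "(\<Sum>a\<in>E. \<nu> a * (\<Sum>b\<in>E. q a b * (F b - F a))) = 0"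
      by simp
  qed
next
  assume gen: "\<forall>F. (\<Sum>a\<in>E. \<nu> a * (\<Sum>b\<in>E. q a b * (F b - F a))) = 0"
  show "balanced E q \<nu>"
    unfolding balanced_def
  proof
    fix b0 assume b0: "b0 \<in> E"
    define F where "F b = (if b = b0 then 1 else 0 :: real)" for b
    have row: "(\<Sum>b\<in>E. q a b * (F b - F a)) = q a b0 - F a * (\<Sum>b\<in>E. q a b)" for a
    proof -
      have "(\<Sum>b\<in>E. q a b * F b) = (\<Sum>b\<in>E. if b = b0 then q a b else 0)"
        by (intro sum.cong) (auto simp: F_def)
      then have "(\<Sum>b\<in>E. q a b * F b) = q a b0"
        using fin b0 by simp
      then show ?thesis
        by (simp add: right_diff_distrib sum_subtractf sum_distrib_left mult.commute)
    qed
    have "0 = (\<Sum>a\<in>E. \<nu> a * (\<Sum>b\<in>E. q a b * (F b - F a)))"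
      using gen by simp
    also have "\<dots> = (\<Sum>a\<in>E. \<nu> a * q a b0 - (if a = b0 then \<nu> a * (\<Sum>b\<in>E. q a b) else 0))"
      unfolding row by (intro sum.cong) (auto simp: F_def right_diff_distrib)
    finally have "0 = (\<Sum>a\<in>E. \<nu> a * q a b0 - (if a = b0 then \<nu> a * (\<Sum>b\<in>E. q a b) else 0))" .
    then show "(\<Sum>a\<in>E. \<nu> a * q a b0) = \<nu> b0 * (\<Sum>a\<in>E. q b0 a)"
      using fin b0 by (simp add: sum_subtractf)
  qed
qed

text \<open>A weighted maximum principle: at a maximum of \<open>h\<close> every predecessor is again a maximum, so a
  maximum propagates back along any path ending in it.\<close>
lemma harmonic_max_at_source:
  fixes q :: "'a \<Rightarrow> 'a \<Rightarrow> real" and \<mu> h :: "'a \<Rightarrow> real"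
  assumes fin: "finite E" and q: "\<forall>a\<in>E. \<forall>b\<in>E. 0 \<le> q a b" and \<mu>: "\<forall>a\<in>E. 0 < \<mu> a"
    and harm: "\<forall>b\<in>E. (\<Sum>a\<in>E. \<mu> a * q a b * (h b - h a)) = 0"
    and max: "\<forall>a\<in>E. h a \<le> h b0"
    and path: "(\<lambda>a b. a \<in> E \<and> b \<in> E \<and> 0 < q a b)\<^sup>*\<^sup>* c b0" and b0: "b0 \<in> E"
  shows "h c = h b0"
  using path
proof (induction rule: converse_rtranclp_induct)
  case (step a b)
  then have ab: "a \<in> E" "b \<in> E" "0 < q a b"
    by auto
  have nonneg: "0 \<le> \<mu> a' * q a' b * (h b - h a')" if "a' \<in> E" for a'
    using \<mu> q max ab(2) step.IH that by (intro mult_nonneg_nonneg) (simp_all add: less_imp_le)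
  have "(\<Sum>a'\<in>E. \<mu> a' * q a' b * (h b - h a')) = 0"
    using harm ab(2) by blast
  then have "\<mu> a * q a b * (h b - h a) = 0"
    using sum_nonneg_eq_0_iff[OF fin, of "\<lambda>a'. \<mu> a' * q a' b * (h b - h a')"] nonneg ab(1)
    by blast
  moreover have "0 < \<mu> a"
    using \<mu> ab(1) by blast
  ultimately have "h b - h a = 0"
    using ab(3) by simp
  then show ?case
    using step.IH by simp
qed simp

lemma balanced_ratio_harmonic:
  fixes q :: "'a \<Rightarrow> 'a \<Rightarrow> real"
  assumes \<mu>: "balanced E q \<mu>" "\<forall>a\<in>E. \<mu> a \<noteq> 0" and \<nu>: "balanced E q \<nu>" and b: "b \<in> E"
  shows "(\<Sum>a\<in>E. \<mu> a * q a b * (\<nu> b / \<mu> b - \<nu> a / \<mu> a)) = 0"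
proof -
  have "\<mu> b \<noteq> 0"
    using \<mu>(2) b by blast
  have "(\<Sum>a\<in>E. \<mu> a * q a b * (\<nu> a / \<mu> a)) = (\<Sum>a\<in>E. \<nu> a * q a b)"
    using \<mu>(2) by (intro sum.cong) auto
  also have "\<dots> = \<nu> b / \<mu> b * (\<Sum>a\<in>E. \<mu> a * q a b)"
    using \<mu>(1) \<nu> b \<open>\<mu> b \<noteq> 0\<close> unfolding balanced_def by simp
  also have "\<dots> = (\<Sum>a\<in>E. \<mu> a * q a b * (\<nu> b / \<mu> b))"
    by (simp add: sum_distrib_left mult.commute)
  finally show ?thesis
    by (simp add: right_diff_distrib sum_subtractf)
qed

lemma balanced_proportional:
  fixes q :: "'a \<Rightarrow> 'a \<Rightarrow> real"
  assumes fin: "finite E" and q: "\<forall>a\<in>E. \<forall>b\<in>E. 0 \<le> q a b"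
    and \<mu>: "balanced E q \<mu>" "\<forall>a\<in>E. 0 < \<mu> a" and \<nu>: "balanced E q \<nu>"
    and c: "c \<in> E" and irreducible: "\<forall>a\<in>E. (\<lambda>a b. a \<in> E \<and> b \<in> E \<and> 0 < q a b)\<^sup>*\<^sup>* c a"
    and a: "a \<in> E"
  shows "\<nu> a = \<nu> c / \<mu> c * \<mu> a"
proof -
  define f where "f a = \<nu> a / \<mu> a" for a
  have "\<forall>a\<in>E. \<mu> a \<noteq> 0"
    using \<mu>(2) by auto
  then have harm: "\<forall>b\<in>E. (\<Sum>a\<in>E. \<mu> a * q a b * (f b - f a)) = 0"
    unfolding f_def using balanced_ratio_harmonic[OF \<mu>(1) _ \<nu>] by blast
  have harm_neg: "\<forall>b\<in>E. (\<Sum>a\<in>E. \<mu> a * q a b * ((- f) b - (- f) a)) = 0"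
  proof
    fix b
    have "(\<Sum>a\<in>E. \<mu> a * q a b * ((- f) b - (- f) a)) = - (\<Sum>a\<in>E. \<mu> a * q a b * (f b - f a))"
      unfolding sum_negf[symmetric] by (intro sum.cong) (simp_all add: algebra_simps)
    then show "b \<in> E \<Longrightarrow> (\<Sum>a\<in>E. \<mu> a * q a b * ((- f) b - (- f) a)) = 0"
      using harm by simp
  qed
  have ne: "E \<noteq> {}"
    using c by blast
  obtain amin where amin: "amin \<in> E" "\<forall>a\<in>E. (- f) a \<le> (- f) amin"
    using ex_is_arg_min_if_finite[OF fin ne, of f] by (auto simp: is_arg_min_linorder)
  obtain amax where amax: "amax \<in> E" "\<forall>a\<in>E. f a \<le> f amax"
    using ex_is_arg_min_if_finite[OF fin ne, of "- f"] by (auto simp: is_arg_min_linorder)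
  have "f c = f amax"
    using harmonic_max_at_source[OF fin q \<mu>(2) harm amax(2) irreducible[rule_format, OF amax(1)]]
      amax(1) .
  moreover have "(- f) c = (- f) amin"
    using harmonic_max_at_source[OF fin q \<mu>(2) harm_neg amin(2) irreducible[rule_format, OF amin(1)]]
      amin(1) .
  moreover have "f amin \<le> f a" "f a \<le> f amax"
    using amin(2) amax(2) a by auto
  ultimately have "\<nu> a / \<mu> a = \<nu> c / \<mu> c"
    by (simp add: f_def)
  moreover have "\<mu> a \<noteq> 0"
    using \<mu>(2) a by fastforce
  ultimately show ?thesis
    by (simp add: divide_eq_eq)
qed

section \<open>The single-species process on compositions\<close>

definition remove_at :: "(nat \<Rightarrow> nat) \<Rightarrow> nat \<Rightarrow> nat \<Rightarrow> nat" where
  "remove_at a i = a(i := a i - 1)"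

definition add_at :: "(nat \<Rightarrow> nat) \<Rightarrow> nat \<Rightarrow> nat \<Rightarrow> nat" where
  "add_at a i = a(i := Suc (a i))"

definition move :: "nat \<Rightarrow> (nat \<Rightarrow> nat) \<Rightarrow> nat \<Rightarrow> nat \<Rightarrow> nat" where
  "move n a i = add_at (remove_at a i) (nxt n i)"

definition move_back :: "nat \<Rightarrow> (nat \<Rightarrow> nat) \<Rightarrow> nat \<Rightarrow> nat \<Rightarrow> nat" where
  "move_back n b i = add_at (remove_at b (nxt n i)) i"

definition zrp_rate :: "(nat \<Rightarrow> real) \<Rightarrow> real \<Rightarrow> (nat \<Rightarrow> nat) \<Rightarrow> nat \<Rightarrow> real" where
  "zrp_rate x t a i = inverse (x i) * qint t (a i)"

definition zrp_rates :: "nat \<Rightarrow> (nat \<Rightarrow> real) \<Rightarrow> real \<Rightarrow> (nat \<Rightarrow> nat) \<Rightarrow> (nat \<Rightarrow> nat) \<Rightarrow> real" where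
  "zrp_rates n x t a b = (\<Sum>i=1..n. if move n a i = b then zrp_rate x t a i else 0)"

definition zrp_weight :: "nat \<Rightarrow> (nat \<Rightarrow> real) \<Rightarrow> real \<Rightarrow> (nat \<Rightarrow> nat) \<Rightarrow> real" where
  "zrp_weight n x t a = (\<Prod>l=1..n. x l ^ a l / qfact t (a l))"

lemma nxt_in_sites: "i \<in> {1..n} \<Longrightarrow> nxt n i \<in> {1..n}"
  by (auto simp: nxt_def)

lemma sum_nxt: "(\<Sum>i=1..n. f (nxt n i)) = (\<Sum>i=1..n. f i :: real)"
  by (rule sum.reindex_bij_witness[where j="nxt n" and i="\<lambda>l. if l = 1 then n else l - 1"])
    (auto simp: nxt_def)

lemma move_apply: "move n a i l = a l - (if l = i then 1 else 0) + (if l = nxt n i then 1 else 0)"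
  by (simp add: move_def add_at_def remove_at_def)

lemma move_pos: "0 < move n a i (nxt n i)"
  by (simp add: move_def add_at_def)

lemma remove_at_add_at [simp]: "remove_at (add_at a i) i = a"
  by (simp add: remove_at_def add_at_def)

lemma add_at_remove_at: "0 < a i \<Longrightarrow> add_at (remove_at a i) i = a"
  by (auto simp: remove_at_def add_at_def)

lemma move_back_move: "0 < a i \<Longrightarrow> move_back n (move n a i) i = a"
  by (simp add: move_def move_back_def add_at_remove_at)

lemma move_move_back: "0 < b (nxt n i) \<Longrightarrow> move n (move_back n b i) i = b"
  by (simp add: move_def move_back_def add_at_remove_at)

lemma compositions_le: "a \<in> compositions n M \<Longrightarrow> i \<in> {1..n} \<Longrightarrow> a i \<le> M"
  using member_le_sum[of i "{1..n}" a] unfolding compositions_def by auto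

lemma finite_compositions: "finite (compositions n M)"
proof -
  have "compositions n M \<subseteq> (\<lambda>v i. if i \<in> {1..n} then v i else 0) ` (PiE {1..n} (\<lambda>_. {0..M}))"
  proof
    fix \<eta> assume e: "\<eta> \<in> compositions n M"
    have "\<eta> i \<le> M" if "i \<in> {1..n}" for i
      using e that by (rule compositions_le)
    then have "restrict \<eta> {1..n} \<in> PiE {1..n} (\<lambda>_. {0..M})"
      by auto
    moreover have "\<eta> = (\<lambda>i. if i \<in> {1..n} then restrict \<eta> {1..n} i else 0)"
      using e unfolding compositions_def by auto
    ultimately show "\<eta> \<in> (\<lambda>v i. if i \<in> {1..n} then v i else 0) ` (PiE {1..n} (\<lambda>_. {0..M}))"
      by blast
  qed
  then show ?thesis
    by (rule finite_subset) (intro finite_imageI finite_PiE; simp)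
qed

lemma fun_upd_in_compositions:
  assumes a: "a \<in> compositions n M" and i: "i \<in> {1..n}"
  shows "a(i := c) \<in> compositions n (M - a i + c)"
proof -
  have "(\<Sum>l=1..n. (a(i := c)) l) = c + (\<Sum>l\<in>{1..n} - {i}. a l)"
    using i by (simp add: sum.remove)
  moreover have "(\<Sum>l=1..n. a l) = a i + (\<Sum>l\<in>{1..n} - {i}. a l)"
    using i by (simp add: sum.remove)
  ultimately show ?thesis
    using a i unfolding compositions_def by auto
qed

lemma remove_at_in_compositions:
  "a \<in> compositions n M \<Longrightarrow> i \<in> {1..n} \<Longrightarrow> 0 < a i \<Longrightarrow> remove_at a i \<in> compositions n (M - 1)"
  using fun_upd_in_compositions[of a n M i "a i - 1"] compositions_le[of a n M i]
  by (simp add: remove_at_def)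

lemma add_at_in_compositions:
  "a \<in> compositions n M \<Longrightarrow> i \<in> {1..n} \<Longrightarrow> add_at a i \<in> compositions n (Suc M)"
  using fun_upd_in_compositions[of a n M i "Suc (a i)"] compositions_le[of a n M i]
  by (simp add: add_at_def)

lemma move_in_compositions:
  assumes "a \<in> compositions n M" "i \<in> {1..n}" "0 < a i"
  shows "move n a i \<in> compositions n M"
  using add_at_in_compositions[OF remove_at_in_compositions[OF assms] nxt_in_sites[OF assms(2)]]
    compositions_le[OF assms(1,2)] assms(3)
  by (simp add: move_def)

lemma move_back_in_compositions:
  assumes "b \<in> compositions n M" "i \<in> {1..n}" "0 < b (nxt n i)"
  shows "move_back n b i \<in> compositions n M"
proof -
  have l: "nxt n i \<in> {1..n}"
    using assms(2) by (rule nxt_in_sites)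
  have "Suc (M - 1) = M"
    using compositions_le[OF assms(1) l] assms(3) by simp
  then show ?thesis
    using add_at_in_compositions[OF remove_at_in_compositions[OF assms(1) l assms(3)] assms(2)]
    by (simp add: move_back_def)
qed

lemma compositions_concentrated:
  assumes a: "a \<in> compositions n M" and n: "1 \<le> n" and empty: "\<forall>l\<in>{2..n}. a l = 0"
  shows "a = (\<lambda>l. if l = 1 then M else 0)"
proof -
  have "(\<Sum>l=1..n. a l) = a 1 + (\<Sum>l=2..n. a l)"
    using n by (simp add: sum.atLeast_Suc_atMost numeral_2_eq_2)
  then have "a 1 = M"
    using a empty unfolding compositions_def by simp
  have "a l = (if l = 1 then M else 0)" for l
  proof (cases "l \<in> {2..n}")
    case False
    then have "l = 1 \<or> l \<notin> {1..n}"
      by auto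
    then show ?thesis
      using \<open>a 1 = M\<close> a unfolding compositions_def by auto
  qed (use empty in auto)
  then show ?thesis
    by blast
qed

text \<open>Induction on \<open>\<Sum>l. l * a l\<close>, which decreases when a particle at a site \<open>l \<ge> 2\<close> is
  moved back to \<open>l - 1\<close>.\<close>
lemma compositions_reachable:
  assumes n: "1 \<le> n" and a0: "a0 \<in> compositions n M"
  shows "(\<lambda>a b. a \<in> compositions n M \<and> b \<in> compositions n M \<and> (\<exists>i\<in>{1..n}. 0 < a i \<and> move n a i = b))\<^sup>*\<^sup>*
           (\<lambda>l. if l = 1 then M else 0) a0"
  (is "?R\<^sup>*\<^sup>* ?base a0")
  using a0
proof (induction "\<Sum>l=1..n. a0 l * l" arbitrary: a0 rule: less_induct)
  case less
  show ?case
  proof (cases "\<exists>l\<in>{2..n}. 0 < a0 l")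
    case False
    then have "a0 = ?base"
      using compositions_concentrated[OF less.prems n] by simp
    then show ?thesis
      by simp
  next
    case True
    then obtain l where l: "l \<in> {2..n}" "0 < a0 l"
      by blast
    define i where "i = l - 1"
    have i: "i \<in> {1..n}" "nxt n i = l" "i < l"
      using l unfolding i_def nxt_def by auto
    define b where "b = move_back n a0 i"
    have b: "b \<in> compositions n M" "0 < b i" "move n b i = a0"
      using move_back_in_compositions[OF less.prems i(1)] move_move_back[of a0 n i] i l
      by (auto simp: b_def move_back_def add_at_def)
    obtain c where c: "a0 l = Suc c"
      using l(2) gr0_implies_Suc by blast
    have "\<And>p. b p * p + (if p = l then l else 0) = a0 p * p + (if p = i then i else 0)"
      using i c by (auto simp: b_def move_back_def add_at_def remove_at_def)
    then have "(\<Sum>p=1..n. b p * p) + (\<Sum>p=1..n. if p = l then l else 0)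
        = (\<Sum>p=1..n. a0 p * p) + (\<Sum>p=1..n. if p = i then i else 0)"
      by (simp only: sum.distrib[symmetric])
    then have "(\<Sum>p=1..n. b p * p) < (\<Sum>p=1..n. a0 p * p)"
      using i l by simp
    then have "?R\<^sup>*\<^sup>* ?base b"
      using b(1) by (rule less.hyps)
    moreover have "?R b a0"
      using b less.prems i(1) by blast
    ultimately show ?thesis
      by (rule rtranclp.rtrancl_into_rtrancl[of ?R])
  qed
qed

lemma zrp_rate_nonneg: "\<forall>i\<in>{1..n}. 0 < x i \<Longrightarrow> 0 < t \<Longrightarrow> i \<in> {1..n} \<Longrightarrow> 0 \<le> zrp_rate x t a i"
  unfolding zrp_rate_def by (intro mult_nonneg_nonneg qint_nonneg) (auto simp: less_imp_le)

lemma zrp_rate_pos: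
  "\<forall>i\<in>{1..n}. 0 < x i \<Longrightarrow> 0 < t \<Longrightarrow> i \<in> {1..n} \<Longrightarrow> 0 < a i \<Longrightarrow> 0 < zrp_rate x t a i"
  unfolding zrp_rate_def by (intro mult_pos_pos qint_pos) auto

lemma zrp_rate_zero: "a i = 0 \<Longrightarrow> zrp_rate x t a i = 0"
  by (simp add: zrp_rate_def)

lemma zrp_rates_nonneg: "\<forall>i\<in>{1..n}. 0 < x i \<Longrightarrow> 0 < t \<Longrightarrow> 0 \<le> zrp_rates n x t a b"
  unfolding zrp_rates_def by (intro sum_nonneg) (simp add: zrp_rate_nonneg)

lemma zrp_rates_pos:
  assumes x: "\<forall>i\<in>{1..n}. 0 < x i" and t: "0 < t" and i: "i \<in> {1..n}" "0 < a i"
  shows "0 < zrp_rates n x t a (move n a i)"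
proof -
  have "0 < zrp_rate x t a i"
    using x t i by (rule zrp_rate_pos)
  also have "\<dots> \<le> zrp_rates n x t a (move n a i)"
    unfolding zrp_rates_def
    using member_le_sum[of i "{1..n}" "\<lambda>l. if move n a l = move n a i then zrp_rate x t a l else 0"]
      i zrp_rate_nonneg[OF x t] by simp
  finally show ?thesis .
qed

lemma zrp_rates_irreducible:
  assumes x: "\<forall>i\<in>{1..n}. 0 < x i" and t: "0 < t" and n: "1 \<le> n" and a: "a \<in> compositions n M"
  shows "(\<lambda>a b. a \<in> compositions n M \<and> b \<in> compositions n M \<and> 0 < zrp_rates n x t a b)\<^sup>*\<^sup>*
           (\<lambda>l. if l = 1 then M else 0) a"
proof -
  let ?E = "compositions n M"
  have "(\<lambda>a b. a \<in> ?E \<and> b \<in> ?E \<and> (\<exists>i\<in>{1..n}. 0 < a i \<and> move n a i = b))\<^sup>*\<^sup>*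
      (\<lambda>l. if l = 1 then M else 0) a"
    using n a by (rule compositions_reachable)
  moreover have "(\<lambda>a b. a \<in> ?E \<and> b \<in> ?E \<and> (\<exists>i\<in>{1..n}. 0 < a i \<and> move n a i = b))\<^sup>*\<^sup>*
      (\<lambda>l. if l = 1 then M else 0) a
      \<longrightarrow> (\<lambda>a b. a \<in> ?E \<and> b \<in> ?E \<and> 0 < zrp_rates n x t a b)\<^sup>*\<^sup>* (\<lambda>l. if l = 1 then M else 0) a"
    by (rule mono_rtranclp) (use zrp_rates_pos[OF x t] in blast)
  ultimately show ?thesis
    by blast
qed

lemma sum_zrp_rates:
  assumes a: "a \<in> compositions n M"
  shows "(\<Sum>b\<in>compositions n M. zrp_rates n x t a b * F b) = (\<Sum>i=1..n. zrp_rate x t a i * F (move n a i))"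
proof -
  let ?E = "compositions n M"
  have "(\<Sum>b\<in>?E. zrp_rates n x t a b * F b)
      = (\<Sum>i=1..n. \<Sum>b\<in>?E. if move n a i = b then zrp_rate x t a i * F b else 0)"
    unfolding zrp_rates_def sum_distrib_right by (subst sum.swap) (auto intro!: sum.cong)
  also have "\<dots> = (\<Sum>i=1..n. zrp_rate x t a i * F (move n a i))"
  proof (intro sum.cong refl)
    fix i assume i: "i \<in> {1..n}"
    show "(\<Sum>b\<in>?E. if move n a i = b then zrp_rate x t a i * F b else 0) = zrp_rate x t a i * F (move n a i)"
      using move_in_compositions[OF a i] zrp_rate_zero[of a i x t] finite_compositions
      by (cases "a i = 0") (auto simp: sum.delta)
  qed
  finally show ?thesis .
qed

lemma zrp_weight_pos: "\<forall>i\<in>{1..n}. 0 < x i \<Longrightarrow> 0 < t \<Longrightarrow> 0 < zrp_weight n x t a"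
  unfolding zrp_weight_def by (intro prod_pos) (auto intro!: divide_pos_pos qfact_pos)

lemma zrp_weight_remove_at:
  assumes x: "\<forall>i\<in>{1..n}. 0 < x i" and t: "0 < t" and i: "i \<in> {1..n}" and a: "0 < a i"
  shows "zrp_weight n x t a * zrp_rate x t a i = zrp_weight n x t (remove_at a i)"
proof -
  let ?\<phi> = "\<lambda>c. x i ^ c / qfact t c" and ?rest = "\<lambda>b. \<Prod>l\<in>{1..n} - {i}. x l ^ b l / qfact t (b l)"
  have split: "zrp_weight n x t b = ?\<phi> (b i) * ?rest b" for b
    unfolding zrp_weight_def using i by (simp add: prod.remove)
  obtain c where c: "a i = Suc c"
    using a gr0_implies_Suc by blast
  have "zrp_weight n x t a * zrp_rate x t a i = (?\<phi> (Suc c) * (inverse (x i) * qint t (Suc c))) * ?rest a"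
    unfolding split zrp_rate_def c by (simp only: ac_simps)
  also have "\<dots> = ?\<phi> c * ?rest a"
    using power_div_qfact_Suc[of "x i" t c] x i t by simp
  also have "?rest a = ?rest (remove_at a i)"
    by (intro prod.cong) (auto simp: remove_at_def)
  also have "?\<phi> c = ?\<phi> (remove_at a i i)"
    by (simp add: remove_at_def c)
  finally show ?thesis
    unfolding split[of "remove_at a i"] .
qed

lemma remove_at_move [simp]: "remove_at (move n a i) (nxt n i) = remove_at a i"
  by (auto simp: move_def remove_at_def add_at_def fun_eq_iff)

lemma zrp_weight_flux:
  assumes x: "\<forall>i\<in>{1..n}. 0 < x i" and t: "0 < t" and i: "i \<in> {1..n}" and a: "0 < a i"
  shows "zrp_weight n x t (move n a i) * zrp_rate x t (move n a i) (nxt n i)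
       = zrp_weight n x t a * zrp_rate x t a i"
  using zrp_weight_remove_at[where a="move n a i", OF x t nxt_in_sites[OF i] move_pos]
    zrp_weight_remove_at[where a=a, OF x t i a] by simp

lemma sum_zrp_weight_move:
  assumes x: "\<forall>i\<in>{1..n}. 0 < x i" and t: "0 < t" and i: "i \<in> {1..n}"
  shows "(\<Sum>a\<in>compositions n M. zrp_weight n x t a * zrp_rate x t a i * G (move n a i))
       = (\<Sum>a\<in>compositions n M. zrp_weight n x t a * zrp_rate x t a (nxt n i) * G a)"
proof -
  let ?E = "compositions n M"
  let ?S = "{a\<in>?E. 0 < a i}" and ?T = "{a\<in>?E. 0 < a (nxt n i)}"
  have "(\<Sum>a\<in>?E. zrp_weight n x t a * zrp_rate x t a i * G (move n a i))
      = (\<Sum>a\<in>?S. zrp_weight n x t a * zrp_rate x t a i * G (move n a i))"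
    by (rule sum.mono_neutral_right) (auto simp: finite_compositions zrp_rate_zero)
  also have "\<dots> = (\<Sum>a\<in>?T. zrp_weight n x t a * zrp_rate x t a (nxt n i) * G a)"
  proof (rule sum.reindex_bij_witness[where i="\<lambda>b. move_back n b i" and j="\<lambda>a. move n a i"])
    show "\<And>a. a \<in> ?S \<Longrightarrow> move_back n (move n a i) i = a"
      by (simp add: move_back_move)
    show "\<And>a. a \<in> ?S \<Longrightarrow> move n a i \<in> ?T"
      using i by (auto simp: move_in_compositions move_pos)
    show "\<And>b. b \<in> ?T \<Longrightarrow> move n (move_back n b i) i = b"
      by (simp add: move_move_back)
    show "move_back n b i \<in> ?S" if "b \<in> ?T" for b
      using move_back_in_compositions[of b n M i] that i by (simp add: move_back_def add_at_def)
    show "\<And>a. a \<in> ?S \<Longrightarrow> zrp_weight n x t (move n a i) * zrp_rate x t (move n a i) (nxt n i)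
        * G (move n a i) = zrp_weight n x t a * zrp_rate x t a i * G (move n a i)"
      using zrp_weight_flux[OF x t i] by simp
  qed
  also have "\<dots> = (\<Sum>a\<in>?E. zrp_weight n x t a * zrp_rate x t a (nxt n i) * G a)"
    by (rule sum.mono_neutral_left) (auto simp: finite_compositions zrp_rate_zero)
  finally show ?thesis .
qed

lemma zrp_weight_balanced:
  assumes x: "\<forall>i\<in>{1..n}. 0 < x i" and t: "0 < t"
  shows "balanced (compositions n M) (zrp_rates n x t) (zrp_weight n x t)"
  unfolding balanced_iff_generator[OF finite_compositions]
proof
  fix F
  let ?E = "compositions n M" and ?w = "zrp_weight n x t" and ?r = "zrp_rate x t"
  have "(\<Sum>a\<in>?E. ?w a * (\<Sum>b\<in>?E. zrp_rates n x t a b * (F b - F a)))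
      = (\<Sum>a\<in>?E. ?w a * (\<Sum>i=1..n. ?r a i * (F (move n a i) - F a)))"
    by (intro sum.cong refl) (simp add: sum_zrp_rates)
  also have "\<dots> = (\<Sum>i=1..n. \<Sum>a\<in>?E. ?w a * ?r a i * F (move n a i))
      - (\<Sum>i=1..n. \<Sum>a\<in>?E. ?w a * ?r a i * F a)"
    by (simp add: sum_distrib_left right_diff_distrib sum_subtractf sum.swap[of _ ?E] mult.assoc)
  also have "(\<Sum>i=1..n. \<Sum>a\<in>?E. ?w a * ?r a i * F (move n a i))
      = (\<Sum>i=1..n. \<Sum>a\<in>?E. ?w a * ?r a (nxt n i) * F a)"
    by (rule sum.cong[OF refl]) (rule sum_zrp_weight_move[OF x t], simp)
  also have "\<dots> = (\<Sum>i=1..n. \<Sum>a\<in>?E. ?w a * ?r a i * F a)"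
    by (rule sum_nxt)
  finally show "(\<Sum>a\<in>?E. ?w a * (\<Sum>b\<in>?E. zrp_rates n x t a b * (F b - F a))) = 0"
    by simp
qed

lemma sum_zrp_weight_rate:
  assumes x: "\<forall>i\<in>{1..n}. 0 < x i" and t: "0 < t" and i: "i \<in> {1..n}" and M: "1 \<le> M"
  shows "(\<Sum>a\<in>compositions n M. zrp_weight n x t a * zrp_rate x t a i)
       = (\<Sum>b\<in>compositions n (M - 1). zrp_weight n x t b)"
proof -
  let ?S = "{a\<in>compositions n M. 0 < a i}"
  have "(\<Sum>a\<in>compositions n M. zrp_weight n x t a * zrp_rate x t a i)
      = (\<Sum>a\<in>?S. zrp_weight n x t a * zrp_rate x t a i)"
    by (rule sum.mono_neutral_right) (auto simp: finite_compositions zrp_rate_zero)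
  also have "\<dots> = (\<Sum>b\<in>compositions n (M - 1). zrp_weight n x t b)"
  proof (rule sum.reindex_bij_witness[where i="\<lambda>b. add_at b i" and j="\<lambda>a. remove_at a i"])
    show "\<And>b. b \<in> compositions n (M - 1) \<Longrightarrow> add_at b i \<in> ?S"
      using add_at_in_compositions[OF _ i, of _ "M - 1"] M by (simp add: add_at_def)
    show "\<And>a. a \<in> ?S \<Longrightarrow> remove_at a i \<in> compositions n (M - 1)"
      using remove_at_in_compositions i by blast
  qed (auto simp: add_at_remove_at zrp_weight_remove_at[OF x t i])
  finally show ?thesis .
qed

lemma Htilde1_eq_sum_zrp_weight:
  "Htilde1 n x t N = qfact t N * (\<Sum>a\<in>compositions n N. zrp_weight n x t a)"
  unfolding Htilde1_def zrp_weight_def sum_distrib_left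
  by (intro sum.cong refl) (simp add: prod_dividef)

section \<open>The mTAZRP and its tail projections\<close>

lemma jump_conservation:
  "0 < w i r \<Longrightarrow> jump n w i r l s + (if l = i \<and> s = r then 1 else 0)
     = w l s + (if l = nxt n i \<and> s = r then 1 else 0)"
  unfolding jump_def by auto

lemma jump_in_configs:
  assumes w: "w \<in> configs k m n" and i: "i \<in> {1..n}" and r: "r \<in> {1..k}" and p: "0 < w i r"
  shows "jump n w i r \<in> configs k m n"
proof -
  have "(\<Sum>l=1..n. jump n w i r l s) = m s" if s: "s \<in> {1..k}" for s
  proof -
    have "(\<Sum>l=1..n. jump n w i r l s) + (\<Sum>l=1..n. if l = i \<and> s = r then 1 else 0)
        = (\<Sum>l=1..n. w l s) + (\<Sum>l=1..n. if l = nxt n i \<and> s = r then 1 else 0)"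
      by (simp only: sum.distrib[symmetric] jump_conservation[where w=w and i=i and r=r, OF p])
    moreover have "(\<Sum>l=1..n. if l = i \<and> s = r then 1 else 0) = (if s = r then 1 else 0 :: nat)"
      "(\<Sum>l=1..n. if l = nxt n i \<and> s = r then 1 else 0) = (if s = r then 1 else 0 :: nat)"
      using i nxt_in_sites[OF i] by (simp_all add: sum.delta')
    ultimately show ?thesis
      using w s unfolding configs_def by simp
  qed
  moreover have "\<forall>l s. jump n w i r l s \<noteq> 0 \<longrightarrow> l \<in> {1..n} \<and> s \<in> {1..k}"
    using w nxt_in_sites[OF i] r i unfolding configs_def jump_def by (auto split: if_splits)
  ultimately show ?thesis
    unfolding configs_def by auto
qed

lemma finite_configs: "stationary k m n x t \<pi> \<Longrightarrow> finite (configs k m n)"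
  unfolding stationary_def by (metis sum.infinite zero_neq_one)

lemma stationary_balanced: "stationary k m n x t \<pi> \<Longrightarrow> balanced (configs k m n) (trans_rate k n x t) \<pi>"
  unfolding stationary_def balanced_def by blast

lemma sum_trans_rate:
  assumes fin: "finite (configs k m n)" and w: "w \<in> configs k m n"
  shows "(\<Sum>w'\<in>configs k m n. trans_rate k n x t w w' * F w')
     = (\<Sum>i=1..n. \<Sum>r=1..k. if 0 < w i r then jump_rate k x t w i r * F (jump n w i r) else 0)"
proof -
  let ?C = "configs k m n"
  have "(\<Sum>w'\<in>?C. trans_rate k n x t w w' * F w') = (\<Sum>i=1..n. \<Sum>r=1..k. \<Sum>w'\<in>?C.
      if 0 < w i r \<and> jump n w i r = w' then jump_rate k x t w i r * F w' else 0)"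
    unfolding trans_rate_def sum_distrib_right
    by (subst sum.swap, rule sum.cong[OF refl], subst sum.swap) (auto intro!: sum.cong)
  also have "\<dots> = (\<Sum>i=1..n. \<Sum>r=1..k. if 0 < w i r then jump_rate k x t w i r * F (jump n w i r) else 0)"
    using jump_in_configs[OF w] fin by (intro sum.cong refl) (auto simp: sum.delta)
  finally show ?thesis .
qed

definition tail_count :: "nat \<Rightarrow> nat \<Rightarrow> (nat \<Rightarrow> nat \<Rightarrow> nat) \<Rightarrow> nat \<Rightarrow> nat" where
  "tail_count j k w = (\<lambda>i. \<Sum>r=j..k. w i r)"

definition tail_marginal :: "nat \<Rightarrow> (nat \<Rightarrow> nat) \<Rightarrow> nat \<Rightarrow> nat \<Rightarrow> ((nat \<Rightarrow> nat \<Rightarrow> nat) \<Rightarrow> real)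
    \<Rightarrow> (nat \<Rightarrow> nat) \<Rightarrow> real" where
  "tail_marginal k m n j \<pi> a = (\<Sum>w\<in>configs k m n. if tail_count j k w = a then \<pi> w else 0)"

lemma tail_count_in_compositions:
  assumes w: "w \<in> configs k m n" and j: "1 \<le> j"
  shows "tail_count j k w \<in> compositions n (\<Sum>l=j..k. m l)"
proof -
  have "(\<Sum>i=1..n. \<Sum>r=j..k. w i r) = (\<Sum>r=j..k. \<Sum>i=1..n. w i r)"
    by (rule sum.swap)
  also have "\<dots> = (\<Sum>r=j..k. m r)"
    using w j unfolding configs_def by (intro sum.cong) auto
  finally show ?thesis
    using w unfolding compositions_def tail_count_def configs_def by (auto intro!: sum.neutral)
qed

lemma tail_count_jump:
  assumes p: "0 < w i r" and r: "j \<le> r" "r \<le> k"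
  shows "tail_count j k (jump n w i r) = move n (tail_count j k w) i"
proof
  fix l
  have "(\<Sum>s=j..k. jump n w i r l s) + (\<Sum>s=j..k. if l = i \<and> s = r then 1 else 0)
      = (\<Sum>s=j..k. w l s) + (\<Sum>s=j..k. if l = nxt n i \<and> s = r then 1 else 0)"
    by (simp only: sum.distrib[symmetric] jump_conservation[where w=w and i=i and r=r, OF p])
  moreover have "l = i \<Longrightarrow> 1 \<le> (\<Sum>s=j..k. w l s)"
    using p r member_le_sum[of r "{j..k}" "w i"] by auto
  ultimately show "tail_count j k (jump n w i r) l = move n (tail_count j k w) i l"
    using r unfolding tail_count_def move_apply by (auto simp: sum.delta split: if_splits)
qed

lemma tail_count_jump_below: "r < j \<Longrightarrow> tail_count j k (jump n w i r) = tail_count j k w"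
  unfolding tail_count_def jump_def by (intro ext sum.cong) auto

lemma sum_jump_rate_tail_count:
  assumes j: "1 \<le> j" "j \<le> k"
  shows "(\<Sum>r=1..k. if 0 < w i r
           then jump_rate k x t w i r * (G (tail_count j k (jump n w i r)) - G (tail_count j k w)) else 0)
       = zrp_rate x t (tail_count j k w) i * (G (move n (tail_count j k w) i) - G (tail_count j k w))"
proof -
  let ?D = "G (move n (tail_count j k w) i) - G (tail_count j k w)"
  have "(\<Sum>r=1..k. if 0 < w i r
           then jump_rate k x t w i r * (G (tail_count j k (jump n w i r)) - G (tail_count j k w)) else 0)
      = (\<Sum>r\<in>{1..k} \<inter> {r. j \<le> r}. jump_rate k x t w i r * ?D)"
    unfolding sum.inter_restrict[OF finite_atLeastAtMost]
    using tail_count_jump[of w i r j k n] tail_count_jump_below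
    by (intro sum.cong refl) (auto simp: jump_rate_def tail_count_jump)
  also have "{1..k} \<inter> {r. j \<le> r} = {j..k}"
    using j by auto
  also have "(\<Sum>r=j..k. jump_rate k x t w i r * ?D) = inverse (x i) * qint t (tail_count j k w i) * ?D"
    unfolding jump_rate_def larger_def tail_count_def qint_sum[OF le_SucI[OF j(2)]]
    by (simp add: sum_distrib_left sum_distrib_right mult.assoc)
  finally show ?thesis
    by (simp add: zrp_rate_def)
qed

lemma sum_tail_marginal:
  assumes fin: "finite (configs k m n)" and j: "1 \<le> j"
  shows "(\<Sum>w\<in>configs k m n. \<pi> w * g (tail_count j k w))
       = (\<Sum>a\<in>compositions n (\<Sum>l=j..k. m l). tail_marginal k m n j \<pi> a * g a)"
proof -
  let ?E = "compositions n (\<Sum>l=j..k. m l)"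
  have "(\<Sum>a\<in>?E. tail_marginal k m n j \<pi> a * g a)
      = (\<Sum>a\<in>?E. \<Sum>w\<in>configs k m n. if tail_count j k w = a then \<pi> w * g a else 0)"
    unfolding tail_marginal_def sum_distrib_right by (intro sum.cong refl) simp
  also have "\<dots> = (\<Sum>w\<in>configs k m n. \<Sum>a\<in>?E. if tail_count j k w = a then \<pi> w * g a else 0)"
    by (rule sum.swap)
  also have "\<dots> = (\<Sum>w\<in>configs k m n. \<pi> w * g (tail_count j k w))"
    using tail_count_in_compositions[OF _ j] finite_compositions
    by (intro sum.cong refl) (simp add: sum.delta)
  finally show ?thesis
    by simp
qed

lemma tail_marginal_balanced:
  assumes st: "stationary k m n x t \<pi>" and j: "1 \<le> j" "j \<le> k"
  shows "balanced (compositions n (\<Sum>l=j..k. m l)) (zrp_rates n x t) (tail_marginal k m n j \<pi>)"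
  unfolding balanced_iff_generator[OF finite_compositions]
proof
  fix G
  let ?C = "configs k m n" and ?E = "compositions n (\<Sum>l=j..k. m l)" and ?p = "tail_count j k"
  have fin: "finite ?C"
    using st by (rule finite_configs)
  have "(\<Sum>a\<in>?E. tail_marginal k m n j \<pi> a * (\<Sum>b\<in>?E. zrp_rates n x t a b * (G b - G a)))
      = (\<Sum>w\<in>?C. \<pi> w * (\<Sum>b\<in>?E. zrp_rates n x t (?p w) b * (G b - G (?p w))))"
    using sum_tail_marginal[OF fin j(1), where g="\<lambda>a. \<Sum>b\<in>?E. zrp_rates n x t a b * (G b - G a)"]
    by simp
  also have "\<dots> = (\<Sum>w\<in>?C. \<pi> w * (\<Sum>w'\<in>?C. trans_rate k n x t w w' * (G (?p w') - G (?p w))))"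
  proof (intro sum.cong refl)
    fix w assume w: "w \<in> ?C"
    show "\<pi> w * (\<Sum>b\<in>?E. zrp_rates n x t (?p w) b * (G b - G (?p w)))
        = \<pi> w * (\<Sum>w'\<in>?C. trans_rate k n x t w w' * (G (?p w') - G (?p w)))"
      unfolding sum_zrp_rates[OF tail_count_in_compositions[OF w j(1)]]
        sum_trans_rate[OF fin w, where F="\<lambda>w'. G (?p w') - G (?p w)"]
        sum_jump_rate_tail_count[OF j] ..
  qed
  also have "\<dots> = 0"
    using balanced_iff_generator[OF fin, THEN iffD1, OF stationary_balanced[OF st], rule_format,
        of "\<lambda>w. G (?p w)"] .
  finally show "(\<Sum>a\<in>?E. tail_marginal k m n j \<pi> a * (\<Sum>b\<in>?E. zrp_rates n x t a b * (G b - G a))) = 0" .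
qed

lemma tail_marginal_eq_zrp_weight:
  assumes st: "stationary k m n x t \<pi>" and x: "\<forall>i\<in>{1..n}. 0 < x i" and t: "0 < t" and n: "1 \<le> n"
    and j: "1 \<le> j" "j \<le> k" and a: "a \<in> compositions n (\<Sum>l=j..k. m l)"
  shows "tail_marginal k m n j \<pi> a
       = zrp_weight n x t a / (\<Sum>b\<in>compositions n (\<Sum>l=j..k. m l). zrp_weight n x t b)"
proof -
  let ?M = "\<Sum>l=j..k. m l"
  let ?E = "compositions n ?M" and ?\<nu> = "tail_marginal k m n j \<pi>" and ?\<mu> = "zrp_weight n x t"
  let ?c = "\<lambda>l. if l = 1 then ?M else 0"
  have c: "?c \<in> ?E"
    using n unfolding compositions_def by (auto simp: sum.delta)
  have "\<forall>a\<in>?E. (\<lambda>a b. a \<in> ?E \<and> b \<in> ?E \<and> 0 < zrp_rates n x t a b)\<^sup>*\<^sup>* ?c a"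
    using zrp_rates_irreducible[OF x t n] by blast
  then have proportional: "?\<nu> b = ?\<nu> ?c / ?\<mu> ?c * ?\<mu> b" if "b \<in> ?E" for b
    using balanced_proportional[OF finite_compositions _ zrp_weight_balanced[OF x t] _
        tail_marginal_balanced[OF st j] c _ that] zrp_rates_nonneg[OF x t] zrp_weight_pos[OF x t]
    by blast
  have "1 = (\<Sum>w\<in>configs k m n. \<pi> w * 1)"
    using st unfolding stationary_def by simp
  also have "\<dots> = (\<Sum>b\<in>?E. ?\<nu> b * 1)"
    using sum_tail_marginal[OF finite_configs[OF st] j(1), where g="\<lambda>_. 1"] .
  also have "\<dots> = ?\<nu> ?c / ?\<mu> ?c * (\<Sum>b\<in>?E. ?\<mu> b)"
    using proportional by (simp add: sum_distrib_left)
  finally have "inverse (\<Sum>b\<in>?E. ?\<mu> b) = ?\<nu> ?c / ?\<mu> ?c"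
    by (metis inverse_unique mult.commute)
  then show ?thesis
    using proportional[OF a] by (simp add: divide_inverse mult.commute)
qed

lemma expected_tail_rate:
  assumes st: "stationary k m n x t \<pi>" and x: "\<forall>i\<in>{1..n}. 0 < x i" and t: "0 < t" and n: "1 \<le> n"
    and j: "1 \<le> j" "j \<le> k" and M: "M = (\<Sum>l=j..k. m l)" "1 \<le> M"
  shows "(\<Sum>w\<in>configs k m n. \<pi> w * zrp_rate x t (tail_count j k w) 1)
       = qint t M * Htilde1 n x t (M - 1) / Htilde1 n x t M"
proof -
  let ?\<mu> = "zrp_weight n x t" and ?E = "compositions n M"
  obtain M' where M': "M = Suc M'"
    using M(2) by (cases M) auto
  have "(\<Sum>w\<in>configs k m n. \<pi> w * zrp_rate x t (tail_count j k w) 1)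
      = (\<Sum>a\<in>?E. tail_marginal k m n j \<pi> a * zrp_rate x t a 1)"
    using sum_tail_marginal[OF finite_configs[OF st] j(1), where g="\<lambda>a. zrp_rate x t a 1"] M(1)
    by simp
  also have "\<dots> = (\<Sum>a\<in>?E. ?\<mu> a * zrp_rate x t a 1) / (\<Sum>a\<in>?E. ?\<mu> a)"
    using tail_marginal_eq_zrp_weight[OF st x t n j] M(1) by (simp add: sum_divide_distrib)
  also have "\<dots> = (\<Sum>b\<in>compositions n M'. ?\<mu> b) / (\<Sum>a\<in>?E. ?\<mu> a)"
    using sum_zrp_weight_rate[OF x t _ M(2)] n M' by simp
  also have "\<dots> = qint t M * Htilde1 n x t M' / Htilde1 n x t M"
    using qint_pos[OF t, of M] qfact_pos[OF t, of M'] M'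
    by (simp add: Htilde1_eq_sum_zrp_weight qfact_Suc)
  finally show ?thesis
    using M' by simp
qed

lemma jump_rate_eq_diff:
  assumes "j \<le> k"
  shows "jump_rate k x t w i j
       = zrp_rate x t (tail_count j k w) i - zrp_rate x t (tail_count (Suc j) k w) i"
proof -
  have "larger k w i j = tail_count (Suc j) k w i"
    unfolding larger_def tail_count_def by (intro sum.cong) auto
  moreover have "tail_count j k w i = w i j + tail_count (Suc j) k w i"
    unfolding tail_count_def using assms by (simp add: sum.atLeast_Suc_atMost)
  ultimately show ?thesis
    unfolding jump_rate_def zrp_rate_def by (simp add: qint_add algebra_simps)
qed

theorem theorem7:
  fixes k n :: nat and m :: "nat \<Rightarrow> nat" and x :: "nat \<Rightarrow> real" and t :: real
    and \<pi> :: "(nat \<Rightarrow> nat \<Rightarrow> nat) \<Rightarrow> real" and j :: nat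
  assumes "\<forall>i\<in>{1..k}. 0 < m i"
    and "1 \<le> n"
    and "\<forall>i\<in>{1..n}. 0 < x i"
    and "0 < t"
    and "stationary k m n x t \<pi>"
    and "1 \<le> j" and "j \<le> k"
  shows "current k m n x t \<pi> j =
           (let M = (\<lambda>i. \<Sum>l=i..k. m l) in
              qint t (M j) * Htilde1 n x t (M j - 1) / Htilde1 n x t (M j)
              - (if j = k then 0
                 else qint t (M (j+1)) * Htilde1 n x t (M (j+1) - 1) / Htilde1 n x t (M (j+1))))"
proof -
  note m = assms(1) and n = assms(2) and x = assms(3) and t = assms(4) and st = assms(5)
    and j = assms(6,7)
  let ?M = "\<lambda>i. \<Sum>l=i..k. m l"
  let ?A = "\<lambda>i. \<Sum>w\<in>configs k m n. \<pi> w * zrp_rate x t (tail_count i k w) 1"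
  have "current k m n x t \<pi> j = ?A j - ?A (Suc j)"
    unfolding current_def jump_rate_eq_diff[OF j(2)] by (simp add: right_diff_distrib sum_subtractf)
  moreover have "?A i = qint t (?M i) * Htilde1 n x t (?M i - 1) / Htilde1 n x t (?M i)"
    if "1 \<le> i" "i \<le> k" for i
  proof (rule expected_tail_rate[OF st x t n that refl])
    show "1 \<le> ?M i"
      using member_le_sum[of i "{i..k}" m] m that by force
  qed
  moreover have "?A (Suc k) = 0"
    by (simp add: tail_count_def zrp_rate_def)
  ultimately show ?thesis
    using j by (cases "j = k") (simp_all add: Let_def)
qed

end
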